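(* Let $G$ be the line graph of a multigraph $H$ with $\Delta(H)<\Delta(G)$. If $G$ is BK-free, then $H$ has no bipartite submultigraph $B$ with at least one edge such that for every edge $xy\in E(B)$, either $d_B(y)\ge d_B(x)=d_H(x)$ or $d_B(x)\ge d_B(y)=d_H(y)$.
   Context: Multigraphs are loopless but may have parallel edges; degrees count edges with multiplicity. The line graph of $H$ has vertex set $E(H)$, two vertices adjacent when the corresponding edges share an endpoint. For a graph $G$ and $f:V(G)\to\mathbb{Z}^+$, an orientation $D$ of $E(G)$ is an Alon--Tarsi orientation for $f$ if $d^+_D(v)<f(v)$ for every vertex $v$ and the number of spanning Eulerian subgraphs of $D$ (spanning subdigraphs in which every vertex has equal in- and out-degree) with an even number of edges differs from the number with an odd number of edges; $G$ is $f$-AT if such an orientation exists. A digraph (in which some edges may be oriented in both directions) is kernel-perfect if every induced subdigraph $D'$ has a kernel, i.e., a set $I\subseteq V(D')$ with no arc between two of its vertices such that every vertex of $D'$ not in $I$ has an out-neighbor in $I$. A graph $H$ is $f$-KP if some supergraph $H'$ of $H$ on the same vertex set (possibly with parallel edges) has a kernel-perfect orientation with $d^+(v)<f(v)$ for all $v$. A connected graph $G$ is BK-free if it has no induced subgraph $H$ that is $f_H$-AT or $f_H$-KP, where $f_H(v)=d_H(v)-1+\Delta(G)-d_G(v)$ for $v\in V(H)$. *)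

theory Defs
  imports Main "HOL-Library.Multiset"
begin

text \<open>A (loopless) multigraph H is given by a vertex set V, an edge set E of edge
identifiers, and an endpoint map ends with ends e a 2-element subset of V.
Parallel edges are distinct identifiers with the same endpoints.\<close>

definition mdeg :: "'e set \<Rightarrow> ('e \<Rightarrow> 'v set) \<Rightarrow> 'v \<Rightarrow> nat" where
  "mdeg E ends v = card {e \<in> E. v \<in> ends e}"

definition mmaxdeg :: "'v set \<Rightarrow> 'e set \<Rightarrow> ('e \<Rightarrow> 'v set) \<Rightarrow> nat" where
  "mmaxdeg V E ends = Max (insert 0 (mdeg E ends ` V))"

definition line_adj :: "('e \<Rightarrow> 'v set) \<Rightarrow> 'e \<Rightarrow> 'e \<Rightarrow> bool" where
  "line_adj ends e f \<longleftrightarrow> e \<noteq> f \<and> ends e \<inter> ends f \<noteq> {}"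

definition deg :: "'a set \<Rightarrow> ('a \<Rightarrow> 'a \<Rightarrow> bool) \<Rightarrow> 'a \<Rightarrow> nat" where
  "deg S adj v = card {w \<in> S. adj v w}"

definition maxdeg :: "'a set \<Rightarrow> ('a \<Rightarrow> 'a \<Rightarrow> bool) \<Rightarrow> nat" where
  "maxdeg S adj = Max (insert 0 (deg S adj ` S))"

definition connected_graph :: "'a set \<Rightarrow> ('a \<Rightarrow> 'a \<Rightarrow> bool) \<Rightarrow> bool" where
  "connected_graph S adj \<longleftrightarrow> S \<noteq> {} \<and>
     (\<forall>u\<in>S. \<forall>v\<in>S. (\<lambda>x y. x \<in> S \<and> y \<in> S \<and> adj x y)\<^sup>*\<^sup>* u v)"

definition is_orientation :: "'a set \<Rightarrow> ('a \<Rightarrow> 'a \<Rightarrow> bool) \<Rightarrow> ('a \<times> 'a) set \<Rightarrow> bool" where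
  "is_orientation T adj Ori \<longleftrightarrow> Ori \<subseteq> T \<times> T \<and>
     (\<forall>u\<in>T. \<forall>v\<in>T. adj u v \<longrightarrow> (u, v) \<in> Ori \<or> (v, u) \<in> Ori) \<and>
     (\<forall>(u, v)\<in>Ori. adj u v \<and> (v, u) \<notin> Ori)"

definition eulerian_on :: "'a set \<Rightarrow> ('a \<times> 'a) set \<Rightarrow> bool" where
  "eulerian_on T A \<longleftrightarrow> (\<forall>v\<in>T. card {w. (v, w) \<in> A} = card {w. (w, v) \<in> A})"

definition f_AT :: "'a set \<Rightarrow> ('a \<Rightarrow> 'a \<Rightarrow> bool) \<Rightarrow> ('a \<Rightarrow> int) \<Rightarrow> bool" where
  "f_AT T adj f \<longleftrightarrow> (\<exists>Ori. is_orientation T adj Ori \<and>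
     (\<forall>v\<in>T. int (card {w. (v, w) \<in> Ori}) < f v) \<and>
     card {A. A \<subseteq> Ori \<and> eulerian_on T A \<and> even (card A)}
       \<noteq> card {A. A \<subseteq> Ori \<and> eulerian_on T A \<and> odd (card A)})"

definition kernel_perfect :: "'a set \<Rightarrow> ('a \<Rightarrow> 'a \<Rightarrow> bool) \<Rightarrow> bool" where
  "kernel_perfect T arc \<longleftrightarrow> (\<forall>S \<subseteq> T. \<exists>I \<subseteq> S.
     (\<forall>x\<in>I. \<forall>y\<in>I. \<not> arc x y) \<and> (\<forall>x \<in> S - I. \<exists>y\<in>I. arc x y))"

text \<open>An oriented multigraph is a multiset of oriented edges (u, v, b): an edge
between u and v, oriented from u to v, and additionally from v to u if b.\<close>
definition arc_of :: "('a \<times> 'a \<times> bool) multiset \<Rightarrow> 'a \<Rightarrow> 'a \<Rightarrow> bool" where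
  "arc_of D x y \<longleftrightarrow> (\<exists>(u, v, b)\<in>#D. (u = x \<and> v = y) \<or> (b \<and> u = y \<and> v = x))"

definition outdeg_of :: "('a \<times> 'a \<times> bool) multiset \<Rightarrow> 'a \<Rightarrow> nat" where
  "outdeg_of D x = size (filter_mset (\<lambda>(u, v, b). u = x \<or> (b \<and> v = x)) D)"

definition f_KP :: "'a set \<Rightarrow> ('a \<Rightarrow> 'a \<Rightarrow> bool) \<Rightarrow> ('a \<Rightarrow> int) \<Rightarrow> bool" where
  "f_KP T adj f \<longleftrightarrow> (\<exists>D :: ('a \<times> 'a \<times> bool) multiset.
     (\<forall>(u, v, b)\<in>#D. u \<in> T \<and> v \<in> T \<and> u \<noteq> v) \<and>
     (\<forall>u\<in>T. \<forall>v\<in>T. adj u v \<longrightarrow> (\<exists>(a, c, b)\<in>#D. {a, c} = {u, v})) \<and>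
     (\<forall>v\<in>T. int (outdeg_of D v) < f v) \<and>
     kernel_perfect T (arc_of D))"

definition fH :: "'a set \<Rightarrow> ('a \<Rightarrow> 'a \<Rightarrow> bool) \<Rightarrow> 'a set \<Rightarrow> 'a \<Rightarrow> int" where
  "fH S adj T v = int (deg T adj v) - 1 + int (maxdeg S adj) - int (deg S adj v)"

definition BK_free :: "'a set \<Rightarrow> ('a \<Rightarrow> 'a \<Rightarrow> bool) \<Rightarrow> bool" where
  "BK_free S adj \<longleftrightarrow> connected_graph S adj \<and>
     (\<forall>T \<subseteq> S. T \<noteq> {} \<longrightarrow> \<not> f_AT T adj (fH S adj T) \<and> \<not> f_KP T adj (fH S adj T))"

definition bipartite_edges :: "'e set \<Rightarrow> ('e \<Rightarrow> 'v set) \<Rightarrow> bool" where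
  "bipartite_edges B ends \<longleftrightarrow> (\<exists>c :: 'v \<Rightarrow> bool. \<forall>e\<in>B. \<forall>x\<in>ends e. \<forall>y\<in>ends e. x \<noteq> y \<longrightarrow> c x \<noteq> c y)"

end

theory Submission
  imports Defs
begin

text \<open>Suppose such a \<open>B\<close> exists and let \<open>f = f\<^bsub>G[B]\<^esub>\<close>. The degree condition on \<open>B\<close> together with
\<open>\<Delta>(H) < \<Delta>(G)\<close> gives \<open>f(e) \<ge> max(d\<^sub>B(x), d\<^sub>B(y))\<close> for every edge \<open>e = xy\<close> of \<open>B\<close>. Since \<open>B\<close> is
bipartite, the edges at each vertex can be ranked \<open>0, 1, \<dots>\<close> so that the two ranks of every edge
sum to less than \<open>max(d\<^sub>B(x), d\<^sub>B(y))\<close>; such rankings are built by repeatedly removing a matching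
that covers the appropriate vertices of maximum degree, which Hall's theorem supplies. Directing
every edge of the line graph of \<open>B\<close> towards the edge of smaller rank at a shared endpoint bounds
each out-degree by the rank sum, and by the Gale--Shapley argument every induced subdigraph has
a kernel. Hence \<open>G[B]\<close> is \<open>f\<close>-KP, contradicting BK-freeness.\<close>

section \<open>Hall's theorem and deficient sets\<close>

lemma inj_on_glue:
  assumes "inj_on g1 S" "g1 ` S \<subseteq> U" "inj_on g2 C" "g2 ` C \<inter> U = {}"
  shows "inj_on (\<lambda>x. if x \<in> S then g1 x else g2 x) (S \<union> C)"
  using assms unfolding inj_on_def by (smt (verit) Un_iff disjoint_iff image_subset_iff imageI)

lemma hall_surplus_reduce:
  assumes "finite A" "\<forall>a\<in>A. finite (G a)"
    and surplus: "\<forall>S\<subseteq>A. S \<noteq> {} \<longrightarrow> S \<noteq> A \<longrightarrow> card S < card (\<Union>(G ` S))"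
    and "a \<in> A"
  shows "\<forall>C\<subseteq>A - {a}. card C \<le> card (\<Union>((\<lambda>x. G x - {b}) ` C))"
proof (intro allI impI)
  fix C assume C: "C \<subseteq> A - {a}"
  show "card C \<le> card (\<Union>((\<lambda>x. G x - {b}) ` C))"
  proof (cases "C = {}")
    case False
    have "finite (\<Union>(G ` C))" using C assms(1,2) by (meson Diff_subset finite_UN_I finite_subset subsetD)
    moreover have "card C < card (\<Union>(G ` C))" using surplus C False \<open>a \<in> A\<close> by blast
    moreover have "card (\<Union>(G ` C)) - 1 \<le> card (\<Union>(G ` C) - {b})" by (simp add: card_Diff_singleton_if)
    ultimately have "card C \<le> card (\<Union>(G ` C) - {b})" by linarith
    moreover have "\<Union>((\<lambda>x. G x - {b}) ` C) = \<Union>(G ` C) - {b}" by auto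
    ultimately show ?thesis by simp
  qed simp
qed

lemma hall_critical_reduce:
  assumes "finite A" "\<forall>a\<in>A. finite (G a)"
    and hall: "\<forall>S\<subseteq>A. card S \<le> card (\<Union>(G ` S))"
    and S: "S \<subseteq> A" "card (\<Union>(G ` S)) \<le> card S"
  shows "\<forall>C\<subseteq>A - S. card C \<le> card (\<Union>((\<lambda>x. G x - \<Union>(G ` S)) ` C))"
proof (intro allI impI)
  fix C assume C: "C \<subseteq> A - S"
  define U where "U = \<Union>(G ` S)"
  define R where "R = \<Union>((\<lambda>x. G x - U) ` C)"
  have "C \<union> S \<subseteq> A" using C S(1) by blast
  then have "finite (C \<union> S)" and fin_G: "\<forall>a\<in>C \<union> S. finite (G a)"
    using assms(1,2) by (auto intro: finite_subset)
  then have fin: "finite C" "finite S" "finite U" "finite R" unfolding U_def R_def by auto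
  have "\<Union>(G ` (C \<union> S)) = R \<union> U" unfolding R_def U_def by auto
  then have "card (C \<union> S) \<le> card (R \<union> U)" using hall \<open>C \<union> S \<subseteq> A\<close> by metis
  moreover have "card (R \<union> U) = card R + card U" using fin by (intro card_Un_disjoint) (auto simp: R_def)
  moreover have "card (C \<union> S) = card C + card S" using C fin by (intro card_Un_disjoint) auto
  ultimately show "card C \<le> card R" using S(2) unfolding U_def[symmetric] by linarith
qed

lemma hall_marriage:
  assumes "finite A" "\<forall>a\<in>A. finite (G a)" "\<forall>S\<subseteq>A. card S \<le> card (\<Union>(G ` S))"
  shows "\<exists>g. inj_on g A \<and> (\<forall>a\<in>A. g a \<in> G a)"
  using assms
proof (induction "card A" arbitrary: A G rule: less_induct)
  case less
  show ?case
  proof (cases "A = {}")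
    case False
    have "\<exists>S U g1. S \<subseteq> A \<and> S \<noteq> {} \<and> inj_on g1 S \<and> (\<forall>a\<in>S. g1 a \<in> G a \<inter> U) \<and>
            (\<forall>C\<subseteq>A - S. card C \<le> card (\<Union>((\<lambda>x. G x - U) ` C)))"
    proof (cases "\<exists>S. S \<subseteq> A \<and> S \<noteq> {} \<and> S \<noteq> A \<and> card (\<Union>(G ` S)) \<le> card S")
      case True
      then obtain S where S: "S \<subseteq> A" "S \<noteq> {}" "S \<noteq> A" "card (\<Union>(G ` S)) \<le> card S" by blast
      have "card S < card A" using S less.prems(1) by (simp add: psubset_card_mono psubsetI)
      then obtain g1 where "inj_on g1 S" "\<forall>a\<in>S. g1 a \<in> G a"
        using less.hyps[of S G] less.prems S(1) finite_subset by (metis subset_iff)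
      then show ?thesis using S hall_critical_reduce[OF less.prems S(1,4)] by blast
    next
      case False
      then have surplus: "\<forall>S\<subseteq>A. S \<noteq> {} \<longrightarrow> S \<noteq> A \<longrightarrow> card S < card (\<Union>(G ` S))"
        by (meson not_le)
      obtain a where a: "a \<in> A" using \<open>A \<noteq> {}\<close> by auto
      have "card {a} \<le> card (\<Union>(G ` {a}))" using less.prems(3) a by blast
      then obtain b where "b \<in> G a" by fastforce
      then show ?thesis using a hall_surplus_reduce[OF less.prems(1,2) surplus a, of b]
        by (intro exI[of _ "{a}"] exI[of _ "{b}"] exI[of _ "\<lambda>_. b"]) auto
    qed
    then obtain S U g1 where S: "S \<subseteq> A" "S \<noteq> {}" "inj_on g1 S" "\<forall>a\<in>S. g1 a \<in> G a \<inter> U"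
      and hall_rest: "\<forall>C\<subseteq>A - S. card C \<le> card (\<Union>((\<lambda>x. G x - U) ` C))" by blast
    have "A - S \<subset> A" using S(1,2) by blast
    then have "card (A - S) < card A" using less.prems(1) by (simp add: psubset_card_mono)
    then obtain g2 where g2: "inj_on g2 (A - S)" "\<forall>a\<in>A - S. g2 a \<in> G a - U"
      using less.hyps[of "A - S" "\<lambda>x. G x - U"] less.prems(1,2) hall_rest by auto
    have g1U: "g1 ` S \<subseteq> U" and g2U: "g2 ` (A - S) \<inter> U = {}" using S(4) g2(2) by auto
    have "inj_on (\<lambda>x. if x \<in> S then g1 x else g2 x) (S \<union> (A - S))"
      by (rule inj_on_glue[OF S(3) g1U g2(1) g2U])
    moreover have "S \<union> (A - S) = A" using S(1) by blast
    moreover have "(if a \<in> S then g1 a else g2 a) \<in> G a" if "a \<in> A" for a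
      using S(4) g2(2) that by (cases "a \<in> S") auto
    ultimately show ?thesis by (intro exI[of _ "\<lambda>x. if x \<in> S then g1 x else g2 x"]) auto
  qed simp
qed

lemma obtain_minimal_deficient:
  fixes N :: "'b set \<Rightarrow> 'a set"
  assumes "finite Y" "R \<subseteq> Y" "R \<noteq> {}" "card (N R) \<le> card R"
  obtains R0 where "R0 \<subseteq> Y" "R0 \<noteq> {}" "card (N R0) \<le> card R0"
    "\<forall>R'. R' \<subset> R0 \<longrightarrow> R' \<noteq> {} \<longrightarrow> card R' < card (N R')"
proof -
  define deficient where "deficient R' \<longleftrightarrow> R' \<subseteq> Y \<and> R' \<noteq> {} \<and> card (N R') \<le> card R'" for R'
  obtain R0 where R0: "deficient R0" and least: "\<And>R'. deficient R' \<Longrightarrow> card R0 \<le> card R'"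
    using ex_has_least_nat[of deficient R card] assms(2-4) unfolding deficient_def by blast
  have "card R' < card (N R')" if R': "R' \<subset> R0" "R' \<noteq> {}" for R'
  proof (rule ccontr)
    assume "\<not> card R' < card (N R')"
    then have "card R0 \<le> card R'" using R' R0 least unfolding deficient_def by force
    moreover have "card R' < card R0" using R'(1) R0 assms(1) unfolding deficient_def
      by (meson psubset_card_mono rev_finite_subset)
    ultimately show False by simp
  qed
  then show thesis using R0 that unfolding deficient_def by blast
qed

lemma minimal_deficient_set_matchable:
  fixes rel :: "'a \<Rightarrow> 'b \<Rightarrow> bool"
  defines "N \<equiv> \<lambda>R. {a. \<exists>y\<in>R. rel a y}"
  assumes fin: "finite R0" "finite (N R0)" and deficient: "card (N R0) \<le> card R0"
    and minimal: "\<forall>R. R \<subset> R0 \<longrightarrow> R \<noteq> {} \<longrightarrow> card R < card (N R)"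
  shows "\<exists>g. inj_on g (N R0) \<and> (\<forall>a\<in>N R0. g a \<in> R0 \<and> rel a (g a))"
proof -
  define G where "G a = {y \<in> R0. rel a y}" for a
  have "card A' \<le> card (\<Union>(G ` A'))" if A': "A' \<subseteq> N R0" for A'
  proof (rule ccontr)
    \<comment> \<open>otherwise removing the neighbourhood of \<open>A'\<close> from \<open>R0\<close> leaves a smaller deficient set\<close>
    assume lt: "\<not> card A' \<le> card (\<Union>(G ` A'))"
    define U where "U = \<Union>(G ` A')"
    define R where "R = R0 - U"
    have U_sub: "U \<subseteq> R0" unfolding U_def G_def by auto
    have fin': "finite A'" "finite U" using A' U_sub fin finite_subset by auto
    obtain a where "a \<in> A'" using lt by (metis all_not_in_conv card.empty zero_le)
    then obtain y where "y \<in> R0" "rel a y" using A' unfolding N_def by auto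
    then have "U \<noteq> {}" using \<open>a \<in> A'\<close> unfolding U_def G_def by auto
    then have "R \<subset> R0" unfolding R_def using U_sub by auto
    have "N R \<subseteq> N R0 - A'" unfolding R_def U_def G_def N_def by auto
    then have "card (N R) \<le> card (N R0) - card A'"
      using card_mono[OF _ \<open>N R \<subseteq> N R0 - A'\<close>] fin(2) A' fin'(1) by (simp add: card_Diff_subset)
    moreover have "card R = card R0 - card U" unfolding R_def using card_Diff_subset[OF fin'(2) U_sub] .
    moreover have "card A' \<le> card (N R0)" using card_mono[OF fin(2) A'] .
    moreover have "card U < card A'" using lt unfolding U_def by simp
    ultimately have "card (N R) < card R" using deficient by linarith
    then show False using minimal \<open>R \<subset> R0\<close> by (metis card.empty not_less0 order.asym)
  qed
  moreover have "\<forall>a\<in>N R0. finite (G a)" using fin(1) unfolding G_def by auto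
  ultimately obtain g where "inj_on g (N R0)" "\<forall>a\<in>N R0. g a \<in> G a"
    using hall_marriage[OF fin(2)] by blast
  then show ?thesis unfolding G_def by auto
qed

lemma matching_of_injection:
  assumes "inj_on g A" and "\<forall>a\<in>A. \<exists>e\<in>T. p e = a \<and> q e = g a"
  shows "\<exists>M\<subseteq>T. inj_on p M \<and> inj_on q M \<and> p ` M = A \<and> q ` M = g ` A"
proof -
  obtain ch where ch: "\<forall>a\<in>A. ch a \<in> T \<and> p (ch a) = a \<and> q (ch a) = g a"
    using bchoice[of A "\<lambda>a e. e \<in> T \<and> p e = a \<and> q e = g a"] assms(2) by blast
  have "inj_on p (ch ` A)" by (rule inj_onI) (use ch in auto)
  moreover have "inj_on q (ch ` A)" by (rule inj_onI) (use ch assms(1) in \<open>auto dest: inj_onD\<close>)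
  moreover have "p ` ch ` A = A" "q ` ch ` A = g ` A" using ch by (force simp: image_image)+
  ultimately show ?thesis using ch by (intro exI[of _ "ch ` A"]) auto
qed

section \<open>Compatible rankings of a bipartite multigraph\<close>

text \<open>A bipartite multigraph is given by its edge set \<open>T\<close> together with the endpoint maps \<open>p\<close> and
\<open>q\<close> into its two sides, so parallel edges are distinct elements of \<open>T\<close>.\<close>

definition fibre :: "('e \<Rightarrow> 'v) \<Rightarrow> 'e set \<Rightarrow> 'v \<Rightarrow> 'e set" where
  "fibre p T a = {e \<in> T. p e = a}"

definition side_deg :: "('e \<Rightarrow> 'v) \<Rightarrow> 'e set \<Rightarrow> 'v \<Rightarrow> nat" where
  "side_deg p T a = card (fibre p T a)"

definition ranking :: "('e \<Rightarrow> 'v) \<Rightarrow> 'e set \<Rightarrow> ('e \<Rightarrow> nat) \<Rightarrow> bool" where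
  "ranking p T r \<longleftrightarrow> (\<forall>a. bij_betw r (fibre p T a) {..<side_deg p T a})"

definition compatible_rankings ::
    "('e \<Rightarrow> 'v) \<Rightarrow> ('e \<Rightarrow> 'w) \<Rightarrow> 'e set \<Rightarrow> ('e \<Rightarrow> nat) \<Rightarrow> ('e \<Rightarrow> nat) \<Rightarrow> bool" where
  "compatible_rankings p q T rp rq \<longleftrightarrow> ranking p T rp \<and> ranking q T rq \<and>
     (\<forall>e\<in>T. rp e + rq e < max (side_deg p T (p e)) (side_deg q T (q e)))"

lemma compatible_rankings_swap:
  "compatible_rankings p q T rp rq \<Longrightarrow> compatible_rankings q p T rq rp"
  unfolding compatible_rankings_def by (auto simp: max.commute add.commute)

lemma fibre_Diff_unmatched: "a \<notin> p ` M \<Longrightarrow> fibre p (T - M) a = fibre p T a"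
  unfolding fibre_def by auto

lemma fibre_Diff_matched:
  assumes "m \<in> M" "M \<subseteq> T" "inj_on p M"
  shows "fibre p T (p m) = insert m (fibre p (T - M) (p m))" "m \<notin> fibre p (T - M) (p m)"
  using assms unfolding fibre_def by (auto dest: inj_onD)

lemma side_deg_Diff_unmatched: "a \<notin> p ` M \<Longrightarrow> side_deg p (T - M) a = side_deg p T a"
  unfolding side_deg_def by (simp add: fibre_Diff_unmatched)

lemma side_deg_Diff_matched:
  assumes "m \<in> M" "M \<subseteq> T" "inj_on p M" "finite T"
  shows "side_deg p T (p m) = Suc (side_deg p (T - M) (p m))"
proof -
  have "finite (fibre p (T - M) (p m))" using assms(4) unfolding fibre_def by auto
  then show ?thesis unfolding side_deg_def using fibre_Diff_matched[OF assms(1-3)] by simp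
qed

lemma side_deg_Diff_le: "finite T \<Longrightarrow> side_deg p (T - M) a \<le> side_deg p T a"
  unfolding side_deg_def fibre_def by (rule card_mono) auto

lemma ranking_extend_last:
  assumes "finite T" "M \<subseteq> T" "inj_on p M" and r: "ranking p (T - M) r"
  shows "ranking p T (\<lambda>e. if e \<in> M then side_deg p (T - M) (p e) else r e)"
  unfolding ranking_def
proof
  fix a
  define r' where "r' = (\<lambda>e. if e \<in> M then side_deg p (T - M) (p e) else r e)"
  define F where "F = fibre p (T - M) a"
  have "bij_betw r F {..<side_deg p (T - M) a}" using r unfolding ranking_def F_def by blast
  moreover have "\<And>e. e \<in> F \<Longrightarrow> r' e = r e" unfolding r'_def F_def fibre_def by auto
  ultimately have F: "bij_betw r' F {..<side_deg p (T - M) a}" using bij_betw_cong by metis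
  show "bij_betw r' (fibre p T a) {..<side_deg p T a}"
  proof (cases "a \<in> p ` M")
    case False
    then show ?thesis using F unfolding F_def by (simp add: fibre_Diff_unmatched side_deg_Diff_unmatched)
  next
    case True
    then obtain m where m: "m \<in> M" "a = p m" by auto
    have "bij_betw r' {m} {side_deg p (T - M) a}" unfolding r'_def using m by (simp add: bij_betw_def)
    then have "bij_betw r' (F \<union> {m}) ({..<side_deg p (T - M) a} \<union> {side_deg p (T - M) a})"
      by (intro bij_betw_combine[OF F]) auto
    moreover have "F \<union> {m} = fibre p T a" using fibre_Diff_matched[OF m(1) assms(2,3)] m(2) unfolding F_def by auto
    moreover have "{..<side_deg p (T - M) a} \<union> {side_deg p (T - M) a} = {..<side_deg p T a}"
      using side_deg_Diff_matched[OF m(1) assms(2,3,1)] m(2) by auto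
    ultimately show ?thesis by simp
  qed
qed

lemma ranking_extend_first:
  assumes "finite T" "M \<subseteq> T" "inj_on q M" and r: "ranking q (T - M) r"
  shows "ranking q T (\<lambda>e. if e \<in> M then 0 else if q e \<in> q ` M then Suc (r e) else r e)"
  unfolding ranking_def
proof
  fix a
  define r' where "r' = (\<lambda>e. if e \<in> M then 0 else if q e \<in> q ` M then Suc (r e) else r e)"
  define F where "F = fibre q (T - M) a"
  have F: "bij_betw r F {..<side_deg q (T - M) a}" using r unfolding ranking_def F_def by blast
  show "bij_betw r' (fibre q T a) {..<side_deg q T a}"
  proof (cases "a \<in> q ` M")
    case False
    have "\<And>e. e \<in> F \<Longrightarrow> r' e = r e" unfolding r'_def F_def fibre_def using False by auto
    then show ?thesis using F False bij_betw_cong unfolding F_def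
      by (metis fibre_Diff_unmatched side_deg_Diff_unmatched)
  next
    case True
    then obtain m where m: "m \<in> M" "a = q m" by auto
    have "bij_betw (Suc \<circ> r) F (Suc ` {..<side_deg q (T - M) a})"
      by (rule bij_betw_trans[OF F]) (simp add: bij_betw_def)
    moreover have "\<And>e. e \<in> F \<Longrightarrow> r' e = (Suc \<circ> r) e" unfolding r'_def F_def fibre_def using True by auto
    ultimately have F': "bij_betw r' F (Suc ` {..<side_deg q (T - M) a})" using bij_betw_cong by metis
    have "bij_betw r' {m} {0}" unfolding r'_def using m by (simp add: bij_betw_def)
    then have "bij_betw r' (F \<union> {m}) (Suc ` {..<side_deg q (T - M) a} \<union> {0})"
      by (intro bij_betw_combine[OF F']) auto
    moreover have "F \<union> {m} = fibre q T a" using fibre_Diff_matched[OF m(1) assms(2,3)] m(2) unfolding F_def by auto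
    moreover have "Suc ` {..<side_deg q (T - M) a} \<union> {0} = {..<side_deg q T a}"
      using side_deg_Diff_matched[OF m(1) assms(2,3,1)] m(2) lessThan_Suc_eq_insert_0 by auto
    ultimately show ?thesis by simp
  qed
qed

definition reducing_matching :: "('e \<Rightarrow> 'v) \<Rightarrow> ('e \<Rightarrow> 'w) \<Rightarrow> 'e set \<Rightarrow> 'e set \<Rightarrow> bool" where
  "reducing_matching p q T M \<longleftrightarrow> M \<subseteq> T \<and> M \<noteq> {} \<and> inj_on p M \<and> inj_on q M \<and>
     (\<forall>e\<in>T. q e \<in> q ` M \<and> p e \<notin> p ` M \<longrightarrow> side_deg p T (p e) < side_deg q T (q e))"

lemma max_side_deg_Diff_less:
  assumes "finite T" "reducing_matching p q T M" "e \<in> T" "q e \<in> q ` M"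
  shows "max (side_deg p (T - M) (p e)) (side_deg q (T - M) (q e)) < max (side_deg p T (p e)) (side_deg q T (q e))"
proof -
  have M: "M \<subseteq> T" "inj_on p M" "inj_on q M" using assms(2) unfolding reducing_matching_def by auto
  obtain m where "m \<in> M" "q e = q m" using assms(4) by auto
  then have dq: "side_deg q T (q e) = Suc (side_deg q (T - M) (q e))"
    using side_deg_Diff_matched[OF _ M(1,3) assms(1)] by simp
  show ?thesis
  proof (cases "p e \<in> p ` M")
    case True
    then obtain m' where "m' \<in> M" "p e = p m'" by auto
    then have "side_deg p T (p e) = Suc (side_deg p (T - M) (p e))"
      using side_deg_Diff_matched[OF _ M(1,2) assms(1)] by simp
    then show ?thesis using dq by auto
  next
    case False
    then have "side_deg p T (p e) < side_deg q T (q e)"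
      using assms(2-4) unfolding reducing_matching_def by blast
    then show ?thesis using dq side_deg_Diff_unmatched[OF False] by auto
  qed
qed

lemma compatible_rankings_extend:
  assumes "finite T" and M: "reducing_matching p q T M"
    and rk: "compatible_rankings p q (T - M) rp rq"
  shows "\<exists>rp' rq'. compatible_rankings p q T rp' rq'"
proof -
  have M_sub: "M \<subseteq> T" and inj: "inj_on p M" "inj_on q M"
    using M unfolding reducing_matching_def by auto
  define rp' where "rp' = (\<lambda>e. if e \<in> M then side_deg p (T - M) (p e) else rp e)"
  define rq' where "rq' = (\<lambda>e. if e \<in> M then 0 else if q e \<in> q ` M then Suc (rq e) else rq e)"
  have "ranking p T rp'" "ranking q T rq'" unfolding rp'_def rq'_def
    using ranking_extend_last[OF assms(1) M_sub inj(1)] ranking_extend_first[OF assms(1) M_sub inj(2)] rk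
    by (auto simp: compatible_rankings_def)
  moreover have "rp' e + rq' e < max (side_deg p T (p e)) (side_deg q T (q e))" if e: "e \<in> T" for e
  proof (cases "e \<in> M")
    case True
    then show ?thesis unfolding rp'_def rq'_def using side_deg_Diff_matched[OF True M_sub inj(1) assms(1)] by simp
  next
    case False
    have ih: "rp e + rq e < max (side_deg p (T - M) (p e)) (side_deg q (T - M) (q e))"
      using rk e False unfolding compatible_rankings_def by auto
    show ?thesis
    proof (cases "q e \<in> q ` M")
      case True
      then show ?thesis unfolding rp'_def rq'_def
        using \<open>e \<notin> M\<close> ih max_side_deg_Diff_less[OF assms(1) M e True] by auto
    next
      case False
      moreover have "side_deg p (T - M) (p e) \<le> side_deg p T (p e)" "side_deg q (T - M) (q e) \<le> side_deg q T (q e)"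
        using assms(1) by (simp_all add: side_deg_Diff_le)
      ultimately show ?thesis unfolding rp'_def rq'_def using \<open>e \<notin> M\<close> ih by auto
    qed
  qed
  ultimately show ?thesis unfolding compatible_rankings_def by blast
qed

definition top_vertices :: "nat \<Rightarrow> ('e \<Rightarrow> 'w) \<Rightarrow> 'e set \<Rightarrow> 'w set" where
  "top_vertices D q T = {b \<in> q ` T. side_deg q T b = D}"

definition tight_nbrs :: "nat \<Rightarrow> ('e \<Rightarrow> 'v) \<Rightarrow> ('e \<Rightarrow> 'w) \<Rightarrow> 'e set \<Rightarrow> 'w set \<Rightarrow> 'v set" where
  "tight_nbrs D p q T R =
     {a. \<exists>y\<in>R. \<exists>e\<in>T. p e = a \<and> q e = y \<and> side_deg p T a = D \<and> side_deg q T y = D}"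

lemma saturating_matching_of_deficient:
  assumes "finite T" "R \<subseteq> top_vertices D q T" "R \<noteq> {}" "card (tight_nbrs D p q T R) \<le> card R"
  obtains R0 M where "R0 \<subseteq> top_vertices D q T" "M \<subseteq> T" "M \<noteq> {}" "inj_on p M" "inj_on q M"
    "q ` M \<subseteq> R0" "tight_nbrs D p q T R0 \<subseteq> p ` M"
proof -
  define rel where "rel a y \<longleftrightarrow> (\<exists>e\<in>T. p e = a \<and> q e = y \<and> side_deg p T a = D \<and> side_deg q T y = D)" for a y
  have nbrs_eq: "tight_nbrs D p q T R' = {a. \<exists>y\<in>R'. rel a y}" for R'
    unfolding tight_nbrs_def rel_def by simp
  have "finite (top_vertices D q T)" unfolding top_vertices_def using assms(1) by simp
  then obtain R0 where R0: "R0 \<subseteq> top_vertices D q T" "R0 \<noteq> {}" "card (tight_nbrs D p q T R0) \<le> card R0"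
    and minimal: "\<forall>R'. R' \<subset> R0 \<longrightarrow> R' \<noteq> {} \<longrightarrow> card R' < card (tight_nbrs D p q T R')"
    using obtain_minimal_deficient[of "top_vertices D q T" R "tight_nbrs D p q T"] assms(2-4) by blast
  have "tight_nbrs D p q T R0 \<subseteq> p ` T" unfolding nbrs_eq rel_def by blast
  then have fin: "finite R0" "finite (tight_nbrs D p q T R0)"
    using R0(1) assms(1) unfolding top_vertices_def by (auto intro: finite_subset)
  obtain g where g: "inj_on g (tight_nbrs D p q T R0)" "\<forall>a\<in>tight_nbrs D p q T R0. g a \<in> R0 \<and> rel a (g a)"
    using minimal_deficient_set_matchable[of R0 rel] fin R0(3) minimal unfolding nbrs_eq by blast
  show thesis
  proof (cases "tight_nbrs D p q T R0 = {}")
    case True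
    obtain y where "y \<in> R0" using R0(2) by auto
    then obtain e where "e \<in> T" "q e \<in> R0" using R0(1) unfolding top_vertices_def by auto
    then show thesis using R0(1) True by (intro that[of R0 "{e}"]) auto
  next
    case False
    have "\<forall>a\<in>tight_nbrs D p q T R0. \<exists>e\<in>T. p e = a \<and> q e = g a" using g(2) unfolding rel_def by blast
    from matching_of_injection[OF g(1) this] obtain M where "M \<subseteq> T" "inj_on p M" "inj_on q M"
      "p ` M = tight_nbrs D p q T R0" "q ` M = g ` tight_nbrs D p q T R0"
      by blast
    then show thesis using R0(1) False g(2) by (intro that[of R0 M]) auto
  qed
qed

lemma reducing_matching_of_deficient:
  assumes "finite T" and D: "\<forall>e\<in>T. side_deg p T (p e) \<le> D"
    and "R \<subseteq> top_vertices D q T" "R \<noteq> {}" "card (tight_nbrs D p q T R) \<le> card R"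
  shows "\<exists>M. reducing_matching p q T M"
proof -
  obtain R0 M where R0: "R0 \<subseteq> top_vertices D q T" and M: "M \<subseteq> T" "M \<noteq> {}" "inj_on p M" "inj_on q M"
    "q ` M \<subseteq> R0" "tight_nbrs D p q T R0 \<subseteq> p ` M"
    using saturating_matching_of_deficient[OF assms(1,3-5)] .
  have "side_deg p T (p e) < side_deg q T (q e)" if e: "e \<in> T" "q e \<in> q ` M" "p e \<notin> p ` M" for e
  proof -
    have "q e \<in> R0" using e(2) M(5) by auto
    then have dq: "side_deg q T (q e) = D" using R0 unfolding top_vertices_def by auto
    have "side_deg p T (p e) \<noteq> D"
    proof
      assume "side_deg p T (p e) = D"
      then have "p e \<in> tight_nbrs D p q T R0" using e(1) \<open>q e \<in> R0\<close> dq unfolding tight_nbrs_def by blast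
      then show False using e(3) M(6) by auto
    qed
    then show ?thesis using D e(1) dq by (simp add: order.strict_iff_order)
  qed
  then show ?thesis using M unfolding reducing_matching_def by blast
qed

lemma reducing_matching_exists:
  assumes "finite T" "T \<noteq> {}"
  shows "\<exists>M. reducing_matching p q T M \<or> reducing_matching q p T M"
proof -
  define D where "D = Max (side_deg p T ` p ` T \<union> side_deg q T ` q ` T)"
  have fin: "finite (side_deg p T ` p ` T \<union> side_deg q T ` q ` T)" using assms(1) by simp
  have Dp: "\<forall>e\<in>T. side_deg p T (p e) \<le> D" and Dq: "\<forall>e\<in>T. side_deg q T (q e) \<le> D"
    unfolding D_def using fin by auto
  define X where "X = top_vertices D p T"
  define Y where "Y = top_vertices D q T"
  have "D \<in> side_deg p T ` p ` T \<union> side_deg q T ` q ` T" unfolding D_def using fin assms(2) by (intro Max_in) auto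
  then have top_ne: "X \<noteq> {} \<or> Y \<noteq> {}" unfolding X_def Y_def top_vertices_def by auto
  have "tight_nbrs D q p T X \<subseteq> Y" "tight_nbrs D p q T Y \<subseteq> X"
    unfolding X_def Y_def tight_nbrs_def top_vertices_def by auto
  moreover have "finite X" "finite Y" unfolding X_def Y_def top_vertices_def using assms(1) by auto
  ultimately have NX: "card (tight_nbrs D q p T X) \<le> card Y" and NY: "card (tight_nbrs D p q T Y) \<le> card X"
    by (simp_all add: card_mono)
  show ?thesis
  proof (cases "Y \<noteq> {} \<and> card (tight_nbrs D p q T Y) \<le> card Y")
    case True
    then show ?thesis using reducing_matching_of_deficient[OF assms(1) Dp, of Y] unfolding Y_def by blast
  next
    case False
    \<comment> \<open>then \<open>X\<close> is deficient: if \<open>Y \<noteq> {}\<close>, its neighbourhood has size \<open>\<le> |Y| < |N(Y)| \<le> |X|\<close>\<close>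
    then have "X \<noteq> {}" "card (tight_nbrs D q p T X) \<le> card X"
      using top_ne NX NY by (cases "Y = {}"; force)+
    then show ?thesis using reducing_matching_of_deficient[OF assms(1) Dq, of X] unfolding X_def by blast
  qed
qed

lemma compatible_rankings_exist:
  assumes "finite T"
  shows "\<exists>rp rq. compatible_rankings p q T rp rq"
  using assms
proof (induction "card T" arbitrary: T rule: less_induct)
  case less
  show ?case
  proof (cases "T = {}")
    case True
    then have "compatible_rankings p q T (\<lambda>_. 0) (\<lambda>_. 0)"
      unfolding compatible_rankings_def ranking_def fibre_def side_deg_def by (simp add: bij_betw_def)
    then show ?thesis by blast
  next
    case False
    then obtain M where M: "reducing_matching p q T M \<or> reducing_matching q p T M"
      using reducing_matching_exists[OF less.prems] by blast
    then have "M \<subseteq> T" "M \<noteq> {}" unfolding reducing_matching_def by auto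
    then have "card (T - M) < card T" using less.prems by (intro psubset_card_mono) auto
    then obtain rp rq where rk: "compatible_rankings p q (T - M) rp rq" using less by blast
    from M show ?thesis
    proof
      assume "reducing_matching p q T M"
      then show ?thesis using compatible_rankings_extend[OF less.prems _ rk] by blast
    next
      assume "reducing_matching q p T M"
      then show ?thesis
        using compatible_rankings_extend[OF less.prems _ compatible_rankings_swap[OF rk]]
          compatible_rankings_swap by blast
    qed
  qed
qed

section \<open>Kernel-perfect orientations of bipartite line graphs\<close>

definition rank_arc :: "('e \<Rightarrow> 'v) \<Rightarrow> ('e \<Rightarrow> 'w) \<Rightarrow> ('e \<Rightarrow> nat) \<Rightarrow> ('e \<Rightarrow> nat) \<Rightarrow> 'e \<Rightarrow> 'e \<Rightarrow> bool" where
  "rank_arc p q rp rq e f \<longleftrightarrow> (p e = p f \<and> rp f < rp e) \<or> (q e = q f \<and> rq f < rq e)"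

definition is_kernel :: "'a set \<Rightarrow> ('a \<Rightarrow> 'a \<Rightarrow> bool) \<Rightarrow> 'a set \<Rightarrow> bool" where
  "is_kernel S arc I \<longleftrightarrow> I \<subseteq> S \<and> (\<forall>x\<in>I. \<forall>y\<in>I. \<not> arc x y) \<and> (\<forall>x\<in>S - I. \<exists>y\<in>I. arc x y)"

definition best_edges :: "('e \<Rightarrow> 'v) \<Rightarrow> ('e \<Rightarrow> nat) \<Rightarrow> 'e set \<Rightarrow> 'e set" where
  "best_edges p rp S = {e \<in> S. \<forall>f\<in>S. p f = p e \<longrightarrow> rp e \<le> rp f}"

lemma best_edges_is_kernel:
  assumes no_rival: "\<forall>x\<in>S. \<forall>y\<in>best_edges p rp S. \<not> (q y = q x \<and> rq y < rq x)"
  shows "is_kernel S (rank_arc p q rp rq) (best_edges p rp S)"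
proof -
  have "\<not> rank_arc p q rp rq x y" if xy: "x \<in> best_edges p rp S" "y \<in> best_edges p rp S" for x y
  proof
    assume "rank_arc p q rp rq x y"
    then consider "p x = p y" "rp y < rp x" | "q x = q y" "rq y < rq x" unfolding rank_arc_def by blast
    then show False
    proof cases
      case 1
      then have "rp x \<le> rp y" using xy unfolding best_edges_def by auto
      then show False using 1(2) by simp
    next
      case 2
      have "x \<in> S" using xy(1) unfolding best_edges_def by simp
      then show False using no_rival xy(2) 2 by force
    qed
  qed
  moreover have "\<exists>y\<in>best_edges p rp S. rank_arc p q rp rq x y" if x: "x \<in> S - best_edges p rp S" for x
  proof -
    obtain z where z: "z \<in> S" "p z = p x" and z_min: "\<forall>f. f \<in> S \<and> p f = p x \<longrightarrow> rp z \<le> rp f"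
      using ex_has_least_nat[of "\<lambda>f. f \<in> S \<and> p f = p x" x rp] x by auto
    have "z \<in> best_edges p rp S" using z z_min unfolding best_edges_def by auto
    moreover obtain f where "f \<in> S" "p f = p x" "rp f < rp x" using x unfolding best_edges_def by auto
    ultimately show ?thesis using z z_min unfolding rank_arc_def by (metis le_less_trans)
  qed
  moreover have "best_edges p rp S \<subseteq> S" unfolding best_edges_def by blast
  ultimately show ?thesis unfolding is_kernel_def by blast
qed

lemma is_kernel_insert_rejected:
  assumes I: "is_kernel (S - {x}) (rank_arc p q rp rq) I" and "x \<in> S"
    and y: "y \<in> best_edges p rp S" "q y = q x" "rq y < rq x"
  shows "is_kernel S (rank_arc p q rp rq) I"
proof -
  have "\<exists>z\<in>I. rank_arc p q rp rq x z"
  proof (cases "y \<in> I")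
    case True
    then show ?thesis using y(2,3) unfolding rank_arc_def by metis
  next
    case False
    then have "y \<in> S - {x} - I" using y(1,3) unfolding best_edges_def by auto
    then obtain z where z: "z \<in> I" "rank_arc p q rp rq y z" using I unfolding is_kernel_def by blast
    have "z \<in> S" using z(1) I unfolding is_kernel_def by blast
    then have "\<not> (p y = p z \<and> rp z < rp y)" using y(1) unfolding best_edges_def by (simp add: not_less)
    then have "q z = q y" "rq z < rq y" using z(2) unfolding rank_arc_def by auto
    then have "rank_arc p q rp rq x z" using y(2,3) unfolding rank_arc_def by simp
    then show ?thesis using z(1) by blast
  qed
  then show ?thesis using I \<open>x \<in> S\<close> unfolding is_kernel_def by auto
qed

lemma rank_arc_kernel:
  assumes "finite S"
  shows "\<exists>I. is_kernel S (rank_arc p q rp rq) I"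
  using assms
proof (induction "card S" arbitrary: S rule: less_induct)
  case less
  show ?case
  proof (cases "\<exists>x\<in>S. \<exists>y\<in>best_edges p rp S. q y = q x \<and> rq y < rq x")
    case True
    then obtain x y where x: "x \<in> S" and y: "y \<in> best_edges p rp S" "q y = q x" "rq y < rq x" by blast
    have "card (S - {x}) < card S" using x less.prems by (rule card_Diff1_less[rotated])
    then obtain I where "is_kernel (S - {x}) (rank_arc p q rp rq) I" using less by blast
    then show ?thesis using is_kernel_insert_rejected[OF _ x y] by blast
  next
    case False
    then have "\<forall>x\<in>S. \<forall>y\<in>best_edges p rp S. \<not> (q y = q x \<and> rq y < rq x)" by blast
    then show ?thesis using best_edges_is_kernel by blast
  qed
qed

lemma ranking_eqD:
  assumes "ranking p T r" "e \<in> T" "f \<in> T" "p e = p f" "r e = r f"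
  shows "e = f"
proof -
  have "inj_on r (fibre p T (p e))" using assms(1) unfolding ranking_def bij_betw_def by blast
  then show ?thesis using assms(2-5) unfolding fibre_def by (auto dest: inj_onD)
qed

lemma rank_arc_total:
  assumes "ranking p T rp" "ranking q T rq" "e \<in> T" "f \<in> T" "e \<noteq> f" "p e = p f \<or> q e = q f"
  shows "rank_arc p q rp rq e f \<or> rank_arc p q rp rq f e"
  using assms ranking_eqD[OF assms(1)] ranking_eqD[OF assms(2)] unfolding rank_arc_def
  by (metis linorder_neqE_nat)

lemma rank_arc_out_degree:
  assumes "ranking p T rp" "ranking q T rq" "finite T" "e \<in> T"
  shows "card {f\<in>T. rank_arc p q rp rq e f} \<le> rp e + rq e"
proof -
  define S1 where "S1 = {f\<in>T. p f = p e \<and> rp f < rp e}"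
  define S2 where "S2 = {f\<in>T. q f = q e \<and> rq f < rq e}"
  have "inj_on rp S1" unfolding S1_def using ranking_eqD[OF assms(1)] by (auto intro: inj_onI)
  then have "card S1 \<le> rp e" using card_inj_on_le[of rp S1 "{..<rp e}"] unfolding S1_def by auto
  moreover have "inj_on rq S2" unfolding S2_def using ranking_eqD[OF assms(2)] by (auto intro: inj_onI)
  then have "card S2 \<le> rq e" using card_inj_on_le[of rq S2 "{..<rq e}"] unfolding S2_def by auto
  moreover have "card {f\<in>T. rank_arc p q rp rq e f} \<le> card (S1 \<union> S2)"
    using assms(3) unfolding S1_def S2_def rank_arc_def by (intro card_mono) auto
  moreover have "card (S1 \<union> S2) \<le> card S1 + card S2" by (rule card_Un_le)
  ultimately show ?thesis by linarith
qed

lemma f_KP_of_kernel_perfect_digraph: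
  fixes arc :: "'a \<Rightarrow> 'a \<Rightarrow> bool"
  assumes "finite T" and irrefl: "\<forall>x\<in>T. \<not> arc x x"
    and covers: "\<forall>u\<in>T. \<forall>v\<in>T. adj u v \<longrightarrow> arc u v \<or> arc v u"
    and out: "\<forall>v\<in>T. int (card {w\<in>T. arc v w}) < f v"
    and kernels: "\<forall>S\<subseteq>T. \<exists>I. is_kernel S arc I"
  shows "f_KP T adj f"
proof -
  define A where "A = {(u, v, False) | u v. u \<in> T \<and> v \<in> T \<and> arc u v}"
  define D where "D = mset_set A"
  have "A \<subseteq> T \<times> T \<times> {False}" unfolding A_def by auto
  then have "finite A" using assms(1) by (simp add: finite_subset)
  then have set_D: "set_mset D = A" unfolding D_def by simp
  have arc_D: "arc_of D x y \<longleftrightarrow> x \<in> T \<and> y \<in> T \<and> arc x y" for x y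
    unfolding arc_of_def set_D A_def by auto
  have outdeg_D: "outdeg_of D x = card {w\<in>T. arc x w}" if "x \<in> T" for x
  proof -
    have "{t \<in> A. case t of (u, v, b) \<Rightarrow> u = x \<or> b \<and> v = x} = (\<lambda>w. (x, w, False)) ` {w\<in>T. arc x w}"
      unfolding A_def using that by force
    then show ?thesis unfolding outdeg_of_def D_def using \<open>finite A\<close> by (simp add: card_image inj_on_def)
  qed
  have "kernel_perfect T (arc_of D)"
    unfolding kernel_perfect_def
  proof (intro allI impI)
    fix S assume "S \<subseteq> T"
    from kernels[rule_format, OF this] obtain I where I: "I \<subseteq> S" "\<forall>x\<in>I. \<forall>y\<in>I. \<not> arc x y" "\<forall>x\<in>S - I. \<exists>y\<in>I. arc x y"
      unfolding is_kernel_def by blast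
    have "\<forall>x\<in>I. \<forall>y\<in>I. \<not> arc_of D x y" using I(2) unfolding arc_D by blast
    moreover have "\<forall>x\<in>S - I. \<exists>y\<in>I. arc_of D x y" using I(1,3) \<open>S \<subseteq> T\<close> unfolding arc_D by blast
    ultimately show "\<exists>I\<subseteq>S. (\<forall>x\<in>I. \<forall>y\<in>I. \<not> arc_of D x y) \<and> (\<forall>x\<in>S - I. \<exists>y\<in>I. arc_of D x y)"
      using I(1) by blast
  qed
  moreover have "\<forall>(u, v, b)\<in>#D. u \<in> T \<and> v \<in> T \<and> u \<noteq> v"
    unfolding set_D A_def using irrefl by auto
  moreover have "\<exists>(a, c, b)\<in>#D. {a, c} = {u, v}" if "u \<in> T" "v \<in> T" "adj u v" for u v
  proof -
    have "(u, v, False) \<in> A \<or> (v, u, False) \<in> A" using covers that unfolding A_def by blast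
    then show ?thesis unfolding set_D by (auto simp: insert_commute)
  qed
  moreover have "\<forall>v\<in>T. int (outdeg_of D v) < f v" using out outdeg_D by simp
  ultimately show ?thesis unfolding f_KP_def by blast
qed

lemma line_graph_f_KP_of_bipartite:
  fixes ends :: "'e \<Rightarrow> 'v set" and p q :: "'e \<Rightarrow> 'v"
  assumes "finite B" and ends: "\<forall>e\<in>B. ends e = {p e, q e}" and sides: "p ` B \<inter> q ` B = {}"
    and f: "\<forall>e\<in>B. int (max (side_deg p B (p e)) (side_deg q B (q e))) \<le> f e"
  shows "f_KP B (line_adj ends) f"
proof -
  obtain rp rq where "compatible_rankings p q B rp rq" using compatible_rankings_exist[OF assms(1)] by blast
  then have rk: "ranking p B rp" "ranking q B rq"
    and sum: "\<forall>e\<in>B. rp e + rq e < max (side_deg p B (p e)) (side_deg q B (q e))"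
    unfolding compatible_rankings_def by auto
  show ?thesis
  proof (rule f_KP_of_kernel_perfect_digraph[where arc = "rank_arc p q rp rq"])
    show "\<forall>x\<in>B. \<not> rank_arc p q rp rq x x" unfolding rank_arc_def by simp
    show "\<forall>u\<in>B. \<forall>v\<in>B. line_adj ends u v \<longrightarrow> rank_arc p q rp rq u v \<or> rank_arc p q rp rq v u"
    proof (intro ballI impI)
      fix u v assume uv: "u \<in> B" "v \<in> B" "line_adj ends u v"
      then have "u \<noteq> v" "{p u, q u} \<inter> {p v, q v} \<noteq> {}" using ends unfolding line_adj_def by auto
      moreover have "p u \<noteq> q v" "q u \<noteq> p v" using sides uv(1,2) by blast+
      ultimately have "p u = p v \<or> q u = q v" by auto
      then show "rank_arc p q rp rq u v \<or> rank_arc p q rp rq v u"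
        using rank_arc_total[OF rk uv(1,2) \<open>u \<noteq> v\<close>] by blast
    qed
    show "\<forall>v\<in>B. int (card {w\<in>B. rank_arc p q rp rq v w}) < f v"
    proof
      fix v assume "v \<in> B"
      then have "card {w\<in>B. rank_arc p q rp rq v w} < max (side_deg p B (p v)) (side_deg q B (q v))"
        using rank_arc_out_degree[OF rk assms(1)] sum by (meson order.strict_trans1)
      moreover have "int (max (side_deg p B (p v)) (side_deg q B (q v))) \<le> f v" using f \<open>v \<in> B\<close> by blast
      ultimately show "int (card {w\<in>B. rank_arc p q rp rq v w}) < f v" by linarith
    qed
    show "\<forall>S\<subseteq>B. \<exists>I. is_kernel S (rank_arc p q rp rq) I"
      using assms(1) rank_arc_kernel rev_finite_subset by blast
  qed fact
qed

section \<open>Degrees in the line graph\<close>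

lemma bipartite_edges_sides:
  fixes ends :: "'e \<Rightarrow> 'v set"
  assumes "bipartite_edges B ends" and two: "\<forall>e\<in>B. card (ends e) = 2"
  obtains p q where "\<forall>e\<in>B. ends e = {p e, q e}" "p ` B \<inter> q ` B = {}"
proof -
  obtain c :: "'v \<Rightarrow> bool" where c: "\<forall>e\<in>B. \<forall>x\<in>ends e. \<forall>y\<in>ends e. x \<noteq> y \<longrightarrow> c x \<noteq> c y"
    using assms(1) unfolding bipartite_edges_def by blast
  define p where "p e = (SOME v. v \<in> ends e \<and> c v)" for e
  define q where "q e = (SOME v. v \<in> ends e \<and> \<not> c v)" for e
  have pq: "ends e = {p e, q e} \<and> c (p e) \<and> \<not> c (q e)" if e: "e \<in> B" for e
  proof -
    obtain a b where ab: "ends e = {a, b}" "a \<noteq> b" using two e by (meson card_2_iff)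
    then have "c a \<noteq> c b" using c e by auto
    then have "\<exists>v. v \<in> ends e \<and> c v" "\<exists>v. v \<in> ends e \<and> \<not> c v" using ab(1) by blast+
    then have "p e \<in> ends e" "c (p e)" "q e \<in> ends e" "\<not> c (q e)"
      unfolding p_def q_def by (metis (mono_tags, lifting) someI_ex)+
    then show ?thesis using ab by auto
  qed
  show thesis
  proof
    show "\<forall>e\<in>B. ends e = {p e, q e}" using pq by blast
    show "p ` B \<inter> q ` B = {}" using pq by (metis (full_types) disjoint_iff imageE)
  qed
qed

lemma side_deg_eq_mdeg:
  assumes ends: "\<forall>e\<in>B. ends e = {p e, q e}" and sides: "p ` B \<inter> q ` B = {}" and "e \<in> B"
  shows "side_deg p B (p e) = mdeg B ends (p e)" "side_deg q B (q e) = mdeg B ends (q e)"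
proof -
  have "p e \<noteq> q f" "q e \<noteq> p f" if "f \<in> B" for f using sides that \<open>e \<in> B\<close> by blast+
  then have "fibre p B (p e) = {f \<in> B. p e \<in> ends f}" "fibre q B (q e) = {f \<in> B. q e \<in> ends f}"
    using ends unfolding fibre_def by auto
  then show "side_deg p B (p e) = mdeg B ends (p e)" "side_deg q B (q e) = mdeg B ends (q e)"
    unfolding side_deg_def mdeg_def by simp_all
qed

lemma mdeg_subset_split:
  assumes "finite E" "B \<subseteq> E"
  shows "mdeg E ends v = mdeg B ends v + card {w \<in> E - B. v \<in> ends w}"
proof -
  have "{w \<in> E. v \<in> ends w} = {w \<in> B. v \<in> ends w} \<union> {w \<in> E - B. v \<in> ends w}" using assms(2) by auto
  moreover have "finite B" using assms finite_subset by auto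
  then have "finite {w \<in> B. v \<in> ends w}" "finite {w \<in> E - B. v \<in> ends w}" using assms(1) by simp_all
  ultimately show ?thesis unfolding mdeg_def by (simp add: card_Un_disjoint disjoint_iff)
qed

lemma line_deg_subset_le:
  assumes "finite E" "B \<subseteq> E" "ends e = {x, y}"
  shows "deg E (line_adj ends) e + mdeg B ends x + mdeg B ends y
    \<le> deg B (line_adj ends) e + mdeg E ends x + mdeg E ends y"
proof -
  define Ax where "Ax = {w \<in> E - B. x \<in> ends w}"
  define Ay where "Ay = {w \<in> E - B. y \<in> ends w}"
  have "{w \<in> E. line_adj ends e w} \<subseteq> {w \<in> B. line_adj ends e w} \<union> Ax \<union> Ay"
    unfolding Ax_def Ay_def line_adj_def using assms(3) by auto
  then have "deg E (line_adj ends) e \<le> card ({w \<in> B. line_adj ends e w} \<union> Ax \<union> Ay)"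
    unfolding deg_def using assms(1,2) by (intro card_mono) (auto simp: Ax_def Ay_def intro: rev_finite_subset)
  also have "\<dots> \<le> deg B (line_adj ends) e + card Ax + card Ay"
    unfolding deg_def by (meson card_Un_le add_le_mono1 order_trans)
  finally show ?thesis using mdeg_subset_split[OF assms(1,2), of ends] unfolding Ax_def Ay_def by fastforce
qed

lemma max_mdeg_le_fH:
  assumes "finite V" "finite E" and ends_V: "\<forall>e\<in>E. ends e \<subseteq> V"
    and Delta: "mmaxdeg V E ends < maxdeg E (line_adj ends)"
    and "B \<subseteq> E" "e \<in> B" "ends e = {x, y}"
    and full_end: "(mdeg B ends y \<ge> mdeg B ends x \<and> mdeg B ends x = mdeg E ends x) \<or>
      (mdeg B ends x \<ge> mdeg B ends y \<and> mdeg B ends y = mdeg E ends y)"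
  shows "int (max (mdeg B ends x) (mdeg B ends y)) \<le> fH E (line_adj ends) B e"
proof -
  have "x \<in> V" "y \<in> V" using ends_V assms(5-7) by auto
  then have "mdeg E ends x \<le> mmaxdeg V E ends" "mdeg E ends y \<le> mmaxdeg V E ends"
    unfolding mmaxdeg_def using assms(1) by (auto intro: Max_ge)
  moreover have "deg E (line_adj ends) e + mdeg B ends x + mdeg B ends y
      \<le> deg B (line_adj ends) e + mdeg E ends x + mdeg E ends y"
    using line_deg_subset_le[of E B ends e x y] assms(2,5,7) by blast
  ultimately show ?thesis using Delta full_end unfolding fH_def by (auto simp: max_def)
qed

theorem mainTheorem14:
  fixes V :: "'v set" and E :: "'e set" and ends :: "'e \<Rightarrow> 'v set"
  assumes "finite V" and "finite E"
    and "\<forall>e\<in>E. ends e \<subseteq> V \<and> card (ends e) = 2"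
    and "mmaxdeg V E ends < maxdeg E (line_adj ends)"
    and "BK_free E (line_adj ends)"
  shows "\<not> (\<exists>B \<subseteq> E. B \<noteq> {} \<and> bipartite_edges B ends \<and>
            (\<forall>e\<in>B. \<forall>x y. ends e = {x, y} \<longrightarrow>
               (mdeg B ends y \<ge> mdeg B ends x \<and> mdeg B ends x = mdeg E ends x) \<or>
               (mdeg B ends x \<ge> mdeg B ends y \<and> mdeg B ends y = mdeg E ends y)))"
proof (rule notI, elim exE conjE, goal_cases)
  case (1 B)
  note B = 1(1-3) and full_end = 1(4)
  have "\<forall>e\<in>B. card (ends e) = 2" using assms(3) B(1) by blast
  then obtain p q where ends: "\<forall>e\<in>B. ends e = {p e, q e}" and sides: "p ` B \<inter> q ` B = {}"
    using bipartite_edges_sides[OF B(3)] by blast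
  have "int (max (side_deg p B (p e)) (side_deg q B (q e))) \<le> fH E (line_adj ends) B e" if "e \<in> B" for e
    using max_mdeg_le_fH[OF assms(1,2) _ assms(4) B(1) that, of "p e" "q e"] assms(3) ends full_end that
      side_deg_eq_mdeg[OF ends sides that] by simp
  then have "f_KP B (line_adj ends) (fH E (line_adj ends) B)"
    using line_graph_f_KP_of_bipartite[OF rev_finite_subset[OF assms(2) B(1)] ends sides] by blast
  then show False using assms(5) B(1,2) unfolding BK_free_def by blast
qed

end
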